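(* Let $\mathfrak{g}$ be a simply laced semisimple Lie algebra with weight lattice $P$ and $P_{\mathbb{Q}}=P\otimes_{\mathbb{Z}}\mathbb{Q}$, and let $\hat{\mathcal{O}}^{\mathfrak{g}}_{\mathbb{Q}}$ be the $\mathbb{C}_q$-module of formal sums $\sum_{\lambda,\mu\in P_{\mathbb{Q}}}c_{\lambda,\mu}Y^\lambda X^\mu$ (infinitely many nonzero $c_{\lambda,\mu}\in\mathbb{C}_q$ allowed). For $\gamma=\begin{pmatrix} b & a\\ p & r\end{pmatrix}\in SL(2,\mathbb{Z})$ define the $\mathbb{C}_q$-linear map $\rho(\gamma)$ termwise on basis elements by $$\rho(\gamma)(Y^\lambda X^\mu)=q^{-(\mu,\mu)ab-2(\mu,\lambda)ap-(\lambda,\lambda)pr}\,Y^{r\lambda+a\mu}X^{p\lambda+b\mu},\qquad \lambda,\mu\in P_{\mathbb{Q}}.$$ Then $\hat{\mathcal{O}}^{\mathfrak{g}}_{\mathbb{Q}}$ forms a faithful representation of $SL(2,\mathbb{Z})$ under this action (in the sense of the context); in particular $\rho(\gamma)=\rho(\gamma')$ implies $\gamma=\gamma'$.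
   Context: $\mathbb{C}_q$ denotes the algebraic closure of $\mathbb{C}((q))$. $(\cdot,\cdot)$ is the invariant bilinear form on $\mathfrak{g}$, extended $\mathbb{Q}$-bilinearly to $P_{\mathbb{Q}}$; the coweights are identified with weights via this form. The symbols $Y^\lambda X^\mu$ are ordered monomials of the rational quantum torus with relations $X^\mu Y^\lambda=q^{-2(\mu,\lambda)}Y^\lambda X^\mu$ ($\mu,\lambda\in P_{\mathbb{Q}}$), forming a $\mathbb{C}_q$-basis of the algebra, and $\rho(\gamma)$ acts coefficientwise on formal sums. The action is a right action: $\rho(\gamma_1)\circ\rho(\gamma_2)=\rho(\gamma_2\gamma_1)$. *)

theory Defs
  imports "HOL-Analysis.Analysis" "HOL-Algebra.Algebraic_Closure_Type"
begin

no_notation fps_nth (infixl \<open>$\<close> 75)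

text \<open>The scalar field C_q: the algebraic closure of the field C((q)) of formal
  Laurent series; the variable q is the Laurent series fls_X.\<close>
type_synonym Cq = "complex fls alg_closure"

text \<open>Rational powers q^s (s rational), given by a fixed compatible system of
  roots of q in C_q, i.e. a group homomorphism (Q,+) -> C_q^* sending 1 to q.\<close>
definition qpow :: "rat \<Rightarrow> Cq" where
  "qpow = (SOME f. (\<forall>x y. f (x + y) = f x * f y) \<and> f 1 = to_ac fls_X)"

text \<open>Simply laced Cartan matrix of finite type (i.e. of a simply laced semisimple
  Lie algebra): symmetric, 2 on the diagonal, off-diagonal entries 0 or -1,
  positive definite.\<close>
definition simply_laced_cartan :: "int ^ 'n ^ 'n \<Rightarrow> bool" where
  "simply_laced_cartan C \<longleftrightarrow>
     (\<forall>i j. C $ i $ j = C $ j $ i) \<and>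
     (\<forall>i. C $ i $ i = 2) \<and>
     (\<forall>i j. i \<noteq> j \<longrightarrow> C $ i $ j \<in> {0, -1}) \<and>
     (\<forall>x :: rat ^ 'n. x \<noteq> 0 \<longrightarrow> (\<Sum>i\<in>UNIV. \<Sum>j\<in>UNIV. x $ i * of_int (C $ i $ j) * x $ j) > 0)"

text \<open>P_Q = P \<otimes> Q is modelled as rat^'n, coordinates w.r.t. the simple roots
  (which form a Q-basis of P_Q); the invariant form with (alpha,alpha)=2 is then
  given by the Cartan matrix.\<close>
definition form :: "int ^ 'n ^ 'n \<Rightarrow> rat ^ 'n \<Rightarrow> rat ^ 'n \<Rightarrow> rat" where
  "form C x y = (\<Sum>i\<in>UNIV. \<Sum>j\<in>UNIV. x $ i * of_int (C $ i $ j) * y $ j)"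

text \<open>Formal sums \<Sum> c_{lambda,mu} Y^lambda X^mu, represented by their coefficient
  function (lambda, mu) \<mapsto> c_{lambda,mu}; arbitrary supports allowed.\<close>
type_synonym 'n formal_sum = "((rat ^ 'n) \<times> (rat ^ 'n)) \<Rightarrow> Cq"

text \<open>SL(2,Z), with gamma = [[b,a],[p,r]], i.e. b = gamma$1$1, a = gamma$1$2,
  p = gamma$2$1, r = gamma$2$2.\<close>
definition SL2Z :: "(int ^ 2 ^ 2) set" where
  "SL2Z = {g. det g = 1}"

definition idx_map :: "int ^ 2 ^ 2 \<Rightarrow> (rat ^ 'n) \<times> (rat ^ 'n) \<Rightarrow> (rat ^ 'n) \<times> (rat ^ 'n)" where
  "idx_map g v = (let b = g$1$1; a = g$1$2; p = g$2$1; r = g$2$2; l = fst v; m = snd v in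
     (of_int r *s l + of_int a *s m, of_int p *s l + of_int b *s m))"

definition q_exp :: "int ^ 'n ^ 'n \<Rightarrow> int ^ 2 ^ 2 \<Rightarrow> (rat ^ 'n) \<times> (rat ^ 'n) \<Rightarrow> rat" where
  "q_exp C g v = (let b = g$1$1; a = g$1$2; p = g$2$1; r = g$2$2; l = fst v; m = snd v in
     - form C m m * of_int (a * b) - 2 * form C m l * of_int (a * p) - form C l l * of_int (p * r))"

text \<open>rho(gamma), the C_q-linear map defined termwise:
  Y^lambda X^mu \<mapsto> q^{q_exp} Y^{r lambda + a mu} X^{p lambda + b mu},
  extended coefficientwise to formal sums: the coefficient of the target monomial
  collects the contributions of all source monomials mapped to it.\<close>
definition rho :: "int ^ 'n ^ 'n \<Rightarrow> int ^ 2 ^ 2 \<Rightarrow> 'n formal_sum \<Rightarrow> 'n formal_sum" where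
  "rho C g f = (\<lambda>w. \<Sum>v\<in>{v. idx_map g v = w}. qpow (q_exp C g v) * f v)"

end

theory Submission
  imports Defs
begin

text \<open>C_q is algebraically closed, so a tower of roots x_0 = q, x_(n+1)^(n+1) = x_n provides
  compatible values q^(1/n!) and hence a homomorphism (Q,+) \<rightarrow> C_q^* with 1 \<mapsto> q.
  For det \<gamma> = 1 the exponent is a coboundary,
  -(\<mu>,\<mu>)ab - 2(\<mu>,\<lambda>)ap - (\<lambda>,\<lambda>)pr = (\<lambda>,\<mu>) - (r\<lambda> + a\<mu>, p\<lambda> + b\<mu>),
  because rb - ap = 1; so the exponents of a composite telescope. The index map is bijective,
  so \<rho>(\<gamma>) is monomial, and applying it to the indicator of a single monomial recovers
  the index map and hence \<gamma>.\<close>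

lemma nth_root_tower:
  fixes c :: "'a::alg_closed_field"
  assumes "c \<noteq> 0"
  obtains x :: "nat \<Rightarrow> 'a" where "x 0 = c" "\<And>n. x (Suc n) ^ Suc n = x n" "\<And>n. x n \<noteq> 0"
proof
  define x where "x = rec_nat c (\<lambda>n y. SOME z. z ^ Suc n = y)"
  show x0: "x 0 = c" by (simp add: x_def)
  show root: "x (Suc n) ^ Suc n = x n" for n
  proof -
    have "\<exists>z. z ^ Suc n = x n" by (rule nth_root_exists) simp
    then have "(SOME z. z ^ Suc n = x n) ^ Suc n = x n" by (rule someI_ex)
    then show ?thesis by (simp add: x_def)
  qed
  show "x n \<noteq> 0" for n
  proof (induction n)
    case (Suc n)
    then show ?case using root[of n] by (metis zero_power zero_less_Suc)
  qed (simp add: x0 assms)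
qed

lemma Ints_mult_of_nat_fact_mono:
  fixes s :: "'a::ring_1"
  assumes "s * of_nat (fact n) \<in> \<int>" "n \<le> m"
  shows "s * of_nat (fact m) \<in> \<int>"
proof -
  obtain k where "fact m = fact n * (k::nat)"
    using fact_dvd[OF assms(2)] by (auto elim: dvdE)
  then have "s * of_nat (fact m) = s * of_nat (fact n) * of_nat k"
    by (simp add: mult.assoc)
  then show ?thesis using assms(1) by simp
qed

lemma rat_mult_of_nat_fact_Ints: "\<exists>n. (s::rat) * of_nat (fact n) \<in> \<int>"
proof -
  obtain a b where ab: "quotient_of s = (a, b)" by (cases "quotient_of s")
  have b: "b > 0" and s: "s = of_int a / of_int b"
    using ab by (simp_all add: quotient_of_denom_pos quotient_of_div)
  have "nat b dvd fact (nat b)"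
    using b by (intro dvd_fact) auto
  then obtain k where k: "fact (nat b) = nat b * (k::nat)" by (auto elim: dvdE)
  have "s * of_nat (fact (nat b)) = of_int (a * int k)"
    using b unfolding s k by simp
  then show ?thesis by (metis Ints_of_int)
qed

lemma root_tower_power_int_eq:
  fixes x :: "nat \<Rightarrow> 'a::field"
  assumes root: "\<And>n. x (Suc n) ^ Suc n = x n"
    and k: "s * of_nat (fact n) = of_int k" and "n \<le> m"
  shows "x m powi \<lfloor>s * of_nat (fact m)\<rfloor> = x n powi k"
  using \<open>n \<le> m\<close>
proof (induction m rule: dec_induct)
  case base
  show ?case using k by simp
next
  case (step m)
  obtain l where l: "s * of_nat (fact m) = of_int l"
    using Ints_mult_of_nat_fact_mono[of s n m] k step.hyps(1) by (auto elim: Ints_cases)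
  have "s * of_nat (fact (Suc m)) = of_int (int (Suc m) * l)"
    by (simp add: l[symmetric] algebra_simps)
  then have "x (Suc m) powi \<lfloor>s * of_nat (fact (Suc m))\<rfloor> = x (Suc m) powi (int (Suc m) * l)"
    by (simp only: floor_of_int)
  also have "\<dots> = (x (Suc m) ^ Suc m) powi l"
    by (simp only: power_int_mult power_int_of_nat)
  also have "\<dots> = x m powi l"
    by (simp only: root)
  also have "\<dots> = x n powi k"
    using step.IH l by simp
  finally show ?case .
qed

lemma rat_power_hom_exists:
  fixes c :: "'a::alg_closed_field"
  assumes "c \<noteq> 0"
  shows "\<exists>f::rat \<Rightarrow> 'a. (\<forall>s t. f (s + t) = f s * f t) \<and> f 1 = c"
proof -
  obtain x :: "nat \<Rightarrow> 'a" where x0: "x 0 = c" and root: "\<And>n. x (Suc n) ^ Suc n = x n"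
    and nonzero: "\<And>n. x n \<noteq> 0"
    using nth_root_tower[OF assms] by blast
  define N where "N s = (SOME n. s * of_nat (fact n) \<in> \<int>)" for s :: rat
  define f where "f s = x (N s) powi \<lfloor>s * of_nat (fact (N s))\<rfloor>" for s
  have N: "s * of_nat (fact (N s)) \<in> \<int>" for s
    unfolding N_def using rat_mult_of_nat_fact_Ints by (rule someI_ex)
  have f_eq: "f s = x n powi k" if k: "s * of_nat (fact n) = of_int k" for s n k
  proof -
    obtain j where j: "s * of_nat (fact (N s)) = of_int j"
      using N by (auto elim: Ints_cases)
    define m where "m = max n (N s)"
    have "f s = x (N s) powi j" using j unfolding f_def by simp
    also have "\<dots> = x m powi \<lfloor>s * of_nat (fact m)\<rfloor>"
      unfolding m_def by (rule root_tower_power_int_eq[OF root j max.cobounded2, symmetric])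
    also have "\<dots> = x n powi k"
      unfolding m_def by (rule root_tower_power_int_eq[OF root k max.cobounded1])
    finally show ?thesis .
  qed
  have "f (s + t) = f s * f t" for s t
  proof -
    define n where "n = max (N s) (N t)"
    obtain k where k: "s * of_nat (fact n) = of_int k"
      using Ints_mult_of_nat_fact_mono[OF N max.cobounded1] unfolding n_def by (auto elim!: Ints_cases)
    obtain l where l: "t * of_nat (fact n) = of_int l"
      using Ints_mult_of_nat_fact_mono[OF N max.cobounded2] unfolding n_def by (auto elim!: Ints_cases)
    have "(s + t) * of_nat (fact n) = of_int (k + l)"
      using k l by (simp add: distrib_right)
    then have "f (s + t) = x n powi (k + l)"
      by (rule f_eq)
    also have "\<dots> = f s * f t"
      using f_eq[OF k] f_eq[OF l] by (simp add: power_int_add nonzero)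
    finally show ?thesis .
  qed
  moreover have "f 1 = c"
    using f_eq[of 1 0 1] x0 by simp
  ultimately show ?thesis by blast
qed

lemma qpow_add: "qpow (s + t) = qpow s * qpow t"
  and qpow_1: "qpow 1 = to_ac fls_X"
proof -
  have "\<exists>f::rat \<Rightarrow> Cq. (\<forall>s t. f (s + t) = f s * f t) \<and> f 1 = to_ac fls_X"
    by (rule rat_power_hom_exists) simp
  from someI_ex[OF this] show "qpow (s + t) = qpow s * qpow t" "qpow 1 = to_ac fls_X"
    unfolding qpow_def by auto
qed

lemma qpow_0: "qpow 0 = 1"
proof -
  have "qpow 1 \<noteq> 0" by (simp add: qpow_1)
  moreover have "qpow 1 = qpow 1 * qpow 0" using qpow_add[of 1 0] by simp
  ultimately show ?thesis by simp
qed

lemma qpow_nonzero: "qpow s \<noteq> 0"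
  using qpow_add[of s "- s"] by (auto simp: qpow_0)

lemma simply_laced_cartan_symmetric:
  assumes "simply_laced_cartan C"
  shows "C $ i $ j = C $ j $ i"
  using conjunct1[OF assms[unfolded simply_laced_cartan_def]] by blast

lemma form_add_left: "form C (x + y) z = form C x z + form C y z"
  unfolding form_def by (simp add: sum.distrib distrib_right)

lemma form_add_right: "form C z (x + y) = form C z x + form C z y"
  unfolding form_def by (simp add: sum.distrib distrib_left)

lemma form_scale_left: "form C (c *s x) z = c * form C x z"
  unfolding form_def by (simp add: sum_distrib_left mult.assoc)

lemma form_scale_right: "form C z (c *s x) = c * form C z x"
  unfolding form_def by (simp add: sum_distrib_left algebra_simps)

lemma form_commute:
  assumes "\<And>i j. C $ i $ j = C $ j $ i"
  shows "form C x y = form C y x"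
  unfolding form_def by (subst sum.swap) (simp add: assms mult_ac)

lemma matrix_matrix_mult_2:
  "((A::'a::semiring_1^2^2) ** B) $ i $ j = A$i$1 * B$1$j + A$i$2 * B$2$j"
  by (simp add: matrix_matrix_mult_def sum_2)

lemma idx_map_idx_map: "idx_map g1 (idx_map g2 v) = idx_map (g2 ** g1) v"
  unfolding idx_map_def Let_def matrix_matrix_mult_2
  by (simp add: vec_eq_iff algebra_simps)

lemma idx_map_mat_1: "idx_map (mat 1) v = v"
  unfolding idx_map_def Let_def by (simp add: mat_def vec_eq_iff)

lemma idx_map_inject:
  assumes "idx_map g = (idx_map g' :: (rat^'n) \<times> (rat^'n) \<Rightarrow> _)"
  shows "g = g'"
proof -
  have "idx_map g (\<chi> i. 1, 0) = idx_map g' (\<chi> i. 1, 0 :: rat^'n)"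
    and "idx_map g (0, \<chi> i. 1) = idx_map g' (0 :: rat^'n, \<chi> i. 1)"
    using assms by simp_all
  then show ?thesis
    by (simp add: idx_map_def Let_def vec_eq_iff forall_2)
qed

definition adjugate_2 :: "int^2^2 \<Rightarrow> int^2^2" where
  "adjugate_2 g = (\<chi> i j. if i = 1 \<and> j = 1 then g$2$2 else if i = 1 then - g$1$2
      else if j = 1 then - g$2$1 else g$1$1)"

lemma adjugate_2_mult: "det g = 1 \<Longrightarrow> adjugate_2 g ** g = mat 1"
  and mult_adjugate_2: "det g = 1 \<Longrightarrow> g ** adjugate_2 g = mat 1"
  by (simp_all add: vec_eq_iff forall_2 matrix_matrix_mult_2 adjugate_2_def det_2 mat_def
      algebra_simps)

lemma idx_map_adjugate_2:
  assumes "det g = 1"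
  shows "idx_map g (idx_map (adjugate_2 g) w) = w" and "idx_map (adjugate_2 g) (idx_map g v) = v"
  by (simp_all add: idx_map_idx_map adjugate_2_mult mult_adjugate_2 assms idx_map_mat_1)

lemma q_exp_coboundary:
  assumes C_sym: "\<And>i j. C $ i $ j = C $ j $ i" and "det g = 1"
  shows "q_exp C g v = case_prod (form C) v - case_prod (form C) (idx_map g v)"
proof -
  obtain l m where v: "v = (l, m)" by (cases v)
  define b a p r where "b = rat_of_int (g$1$1)" and "a = rat_of_int (g$1$2)"
    and "p = rat_of_int (g$2$1)" and "r = rat_of_int (g$2$2)"
  have "b * r - a * p = 1"
    using \<open>det g = 1\<close> unfolding b_def a_def p_def r_def det_2
    by (metis of_int_1 of_int_diff of_int_mult)
  then have rb_ap: "r * b + a * p = 1 + 2 * (a * p)"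
    by (simp add: algebra_simps)
  have "case_prod (form C) v - case_prod (form C) (idx_map g v)
      = form C l m - form C (r *s l + a *s m) (p *s l + b *s m)"
    by (simp add: v idx_map_def b_def a_def p_def r_def)
  also have "\<dots> = form C l m
      - (r * p * form C l l + (r * b + a * p) * form C l m + a * b * form C m m)"
    by (simp add: form_add_left form_add_right form_scale_left form_scale_right
        form_commute[OF C_sym, of m l] algebra_simps)
  also have "\<dots> = - form C m m * (a * b) - 2 * form C m l * (a * p) - form C l l * (p * r)"
    unfolding rb_ap by (simp add: form_commute[OF C_sym, of m l] algebra_simps)
  also have "\<dots> = q_exp C g v"
    by (simp add: q_exp_def Let_def v b_def a_def p_def r_def)
  finally show ?thesis by (rule sym)
qed

lemma q_exp_cocycle:
  assumes C_sym: "\<And>i j. C $ i $ j = C $ j $ i" and "det g1 = 1" "det g2 = 1"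
  shows "q_exp C g2 v + q_exp C g1 (idx_map g2 v) = q_exp C (g2 ** g1) v"
proof -
  have "det (g2 ** g1) = 1" using assms by (simp add: det_mul)
  then show ?thesis
    using assms by (simp add: q_exp_coboundary[OF C_sym] idx_map_idx_map)
qed

lemma rho_monomial:
  assumes "det g = 1"
  shows "rho C g f (idx_map g v) = qpow (q_exp C g v) * f v"
proof -
  have "u = v" if "idx_map g u = idx_map g v" for u
    by (metis that idx_map_adjugate_2(2)[OF assms])
  then have "{u. idx_map g u = idx_map g v} = {v}" by blast
  then show ?thesis unfolding rho_def by simp
qed

lemma rho_linear: "rho C g (\<lambda>v. c * f v + f' v) = (\<lambda>w. c * rho C g f w + rho C g f' w)"
  unfolding rho_def by (simp add: sum.distrib sum_distrib_left distrib_left mult.left_commute)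

lemma rho_mat_1:
  fixes C :: "int^'n^'n"
  shows "rho C (mat 1) = id"
proof (intro ext)
  fix f :: "'n formal_sum" and w
  have "q_exp C (mat 1) w = 0" by (simp add: q_exp_def mat_def)
  then show "rho C (mat 1) f w = id f w"
    using rho_monomial[of "mat 1" C f w] by (simp add: idx_map_mat_1 qpow_0)
qed

lemma rho_comp:
  fixes C :: "int^'n^'n"
  assumes "\<And>i j. C $ i $ j = C $ j $ i" and "det g1 = 1" "det g2 = 1"
  shows "rho C g1 \<circ> rho C g2 = rho C (g2 ** g1)"
proof (intro ext)
  fix f :: "'n formal_sum" and w :: "(rat^'n) \<times> (rat^'n)"
  have det: "det (g2 ** g1) = 1" using assms by (simp add: det_mul)
  define v where "v = idx_map (adjugate_2 (g2 ** g1)) w"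
  have w: "w = idx_map (g2 ** g1) v"
    unfolding v_def by (rule idx_map_adjugate_2(1)[OF det, symmetric])
  have "(rho C g1 \<circ> rho C g2) f w = qpow (q_exp C g1 (idx_map g2 v)) * (qpow (q_exp C g2 v) * f v)"
    using assms by (simp add: w rho_monomial flip: idx_map_idx_map)
  also have "\<dots> = qpow (q_exp C g2 v + q_exp C g1 (idx_map g2 v)) * f v"
    by (simp add: qpow_add mult_ac)
  also have "\<dots> = qpow (q_exp C (g2 ** g1) v) * f v"
    by (simp only: q_exp_cocycle[OF assms])
  also have "\<dots> = rho C (g2 ** g1) f w"
    by (simp add: w rho_monomial[OF det])
  finally show "(rho C g1 \<circ> rho C g2) f w = rho C (g2 ** g1) f w" .
qed

lemma rho_inject:
  fixes C :: "int^'n^'n"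
  assumes "det g = 1" "det g' = 1" and eq: "rho C g = rho C g'"
  shows "g = g'"
proof -
  have "idx_map g v = idx_map g' v" for v :: "(rat^'n) \<times> (rat^'n)"
  proof -
    define \<delta> :: "'n formal_sum" where "\<delta> u = (if u = v then 1 else 0)" for u
    define u where "u = idx_map (adjugate_2 g') (idx_map g v)"
    have u: "idx_map g v = idx_map g' u"
      unfolding u_def by (rule idx_map_adjugate_2(1)[OF assms(2), symmetric])
    have "qpow (q_exp C g' u) * \<delta> u = rho C g' \<delta> (idx_map g' u)"
      by (rule rho_monomial[OF assms(2), symmetric])
    also have "\<dots> = rho C g \<delta> (idx_map g v)"
      by (simp only: eq u)
    also have "\<dots> = qpow (q_exp C g v)"
      by (simp add: rho_monomial[OF assms(1)] \<delta>_def)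
    finally have "\<delta> u \<noteq> 0"
      using qpow_nonzero[of "q_exp C g v"] by auto
    then have "u = v" by (simp add: \<delta>_def split: if_splits)
    then show ?thesis using u by simp
  qed
  then have "idx_map g = (idx_map g' :: (rat^'n) \<times> (rat^'n) \<Rightarrow> _)"
    by (simp add: fun_eq_iff)
  then show ?thesis by (rule idx_map_inject)
qed

theorem mainTheorem4:
  fixes C :: "int ^ 'n ^ 'n"
  assumes "simply_laced_cartan C"
  shows "(\<forall>g\<in>SL2Z. \<forall>(c::Cq) f f'. rho C g (\<lambda>v. c * f v + f' v) = (\<lambda>w. c * rho C g f w + rho C g f' w))
       \<and> rho C (mat 1) = id
       \<and> (\<forall>g1\<in>SL2Z. \<forall>g2\<in>SL2Z. rho C g1 \<circ> rho C g2 = rho C (g2 ** g1))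
       \<and> (\<forall>g\<in>SL2Z. \<forall>g'\<in>SL2Z. rho C g = rho C g' \<longrightarrow> g = g')"
proof (intro conjI ballI allI impI)
  fix g g' assume "g \<in> SL2Z" "g' \<in> SL2Z" "rho C g = rho C g'"
  then show "g = g'"
    unfolding SL2Z_def by (intro rho_inject[of g g' C]) simp_all
next
  fix g1 g2 assume "g1 \<in> SL2Z" "g2 \<in> SL2Z"
  then show "rho C g1 \<circ> rho C g2 = rho C (g2 ** g1)"
    unfolding SL2Z_def by (intro rho_comp simply_laced_cartan_symmetric[OF assms]) simp_all
qed (simp_all only: rho_linear rho_mat_1)

end
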